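(* Let $\ell$ and $w$ be linear spaces of sequences in $\mathbb{K}$ ($\mathbb{K}\in\{\mathbb{R},\mathbb{C}\}$), each endowed with a norm, quasi-norm or $\alpha$-norm, satisfying: (1) $\ell \subset c_0$ and $w\subset c_0$; (2) for all $x\in w$ and all $k\in\mathbb{N}$ one has $|x_k|\le \|x\|_w$; (3) $\ell$ is a linear subspace of $w$, the identity (embedding) operator $I\colon \ell\to w$ satisfies $0<\|I\|\le 1$, where $\|I\|=\sup_{x\in B_\ell}\|x\|_w$, and $e^j\in B_\ell$ for every $j\in\mathbb{N}$. Then $I$ is maximally non-compact, i.e. $\alpha(I)=\|I\|$.
   Context: $B_X$ denotes the closed unit ball of a (quasi/$\alpha$-)normed space $X$, and $e^j$ denotes the sequence with $1$ in the $j$-th position and $0$ elsewhere. $c_0$ is the space of scalar sequences converging to $0$. For a bounded map $T\colon X\to Y$ between (quasi/$\alpha$-)normed spaces, the ball measure of non-compactness is $\alpha(T)=\inf\{r>0:\ T(B_X)\subset\bigcup_{i=1}^m (y_i+rB_Y)\text{ for some } m\in\mathbb{N},\ y_1,\dots,y_m\in Y\}$, and the operator norm is $\|T\|=\sup_{x\in B_X}\|Tx\|$. $T$ is called maximally non-compact if $\alpha(T)=\|T\|$. *)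

theory Defs
  imports "HOL-Analysis.Analysis"
begin

text \<open>Sequences in K are functions nat => 'a, with 'a a real normed field
  (i.e. R or C). Pointwise operations are written out explicitly.\<close>

definition seq_zero :: "nat \<Rightarrow> 'a::real_normed_field" where
  "seq_zero = (\<lambda>_. 0)"

definition seq_add :: "(nat \<Rightarrow> 'a::real_normed_field) \<Rightarrow> (nat \<Rightarrow> 'a) \<Rightarrow> (nat \<Rightarrow> 'a)" where
  "seq_add x y = (\<lambda>k. x k + y k)"

definition seq_scale :: "'a::real_normed_field \<Rightarrow> (nat \<Rightarrow> 'a) \<Rightarrow> (nat \<Rightarrow> 'a)" where
  "seq_scale c x = (\<lambda>k. c * x k)"

definition seq_diff :: "(nat \<Rightarrow> 'a::real_normed_field) \<Rightarrow> (nat \<Rightarrow> 'a) \<Rightarrow> (nat \<Rightarrow> 'a)" where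
  "seq_diff x y = (\<lambda>k. x k - y k)"

definition unit_seq :: "nat \<Rightarrow> nat \<Rightarrow> 'a::real_normed_field" where
  "unit_seq j = (\<lambda>k. if k = j then 1 else 0)"

definition c0 :: "(nat \<Rightarrow> 'a::real_normed_field) set" where
  "c0 = {x. x \<longlonglongrightarrow> 0}"

definition lin_subspace :: "(nat \<Rightarrow> 'a::real_normed_field) set \<Rightarrow> bool" where
  "lin_subspace X \<longleftrightarrow> seq_zero \<in> X \<and> (\<forall>x\<in>X. \<forall>y\<in>X. seq_add x y \<in> X)
     \<and> (\<forall>c. \<forall>x\<in>X. seq_scale c x \<in> X)"

definition is_seq_norm :: "(nat \<Rightarrow> 'a::real_normed_field) set \<Rightarrow> ((nat \<Rightarrow> 'a) \<Rightarrow> real) \<Rightarrow> bool" where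
  "is_seq_norm X N \<longleftrightarrow> (\<forall>x\<in>X. 0 \<le> N x) \<and> (\<forall>x\<in>X. N x = 0 \<longleftrightarrow> x = seq_zero)
     \<and> (\<forall>c. \<forall>x\<in>X. N (seq_scale c x) = norm c * N x)
     \<and> (\<forall>x\<in>X. \<forall>y\<in>X. N (seq_add x y) \<le> N x + N y)"

definition is_seq_quasinorm :: "(nat \<Rightarrow> 'a::real_normed_field) set \<Rightarrow> ((nat \<Rightarrow> 'a) \<Rightarrow> real) \<Rightarrow> bool" where
  "is_seq_quasinorm X N \<longleftrightarrow> (\<forall>x\<in>X. 0 \<le> N x) \<and> (\<forall>x\<in>X. N x = 0 \<longleftrightarrow> x = seq_zero)
     \<and> (\<forall>c. \<forall>x\<in>X. N (seq_scale c x) = norm c * N x)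
     \<and> (\<exists>C\<ge>1. \<forall>x\<in>X. \<forall>y\<in>X. N (seq_add x y) \<le> C * (N x + N y))"

definition is_seq_alpha_norm :: "real \<Rightarrow> (nat \<Rightarrow> 'a::real_normed_field) set \<Rightarrow> ((nat \<Rightarrow> 'a) \<Rightarrow> real) \<Rightarrow> bool" where
  "is_seq_alpha_norm \<alpha> X N \<longleftrightarrow> 0 < \<alpha> \<and> \<alpha> \<le> 1 \<and> (\<forall>x\<in>X. 0 \<le> N x) \<and> (\<forall>x\<in>X. N x = 0 \<longleftrightarrow> x = seq_zero)
     \<and> (\<forall>c. \<forall>x\<in>X. N (seq_scale c x) = norm c powr \<alpha> * N x)
     \<and> (\<forall>x\<in>X. \<forall>y\<in>X. N (seq_add x y) \<le> N x + N y)"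

definition is_gen_norm :: "(nat \<Rightarrow> 'a::real_normed_field) set \<Rightarrow> ((nat \<Rightarrow> 'a) \<Rightarrow> real) \<Rightarrow> bool" where
  "is_gen_norm X N \<longleftrightarrow> is_seq_norm X N \<or> is_seq_quasinorm X N \<or> (\<exists>\<alpha>. is_seq_alpha_norm \<alpha> X N)"

definition closed_unit_ball :: "(nat \<Rightarrow> 'a::real_normed_field) set \<Rightarrow> ((nat \<Rightarrow> 'a) \<Rightarrow> real) \<Rightarrow> (nat \<Rightarrow> 'a) set" where
  "closed_unit_ball X N = {x\<in>X. N x \<le> 1}"

definition shifted_ball :: "(nat \<Rightarrow> 'a::real_normed_field) set \<Rightarrow> ((nat \<Rightarrow> 'a) \<Rightarrow> real) \<Rightarrow> (nat \<Rightarrow> 'a) \<Rightarrow> real \<Rightarrow> (nat \<Rightarrow> 'a) set" where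
  "shifted_ball Y N y r = (\<lambda>b. seq_add y (seq_scale (of_real r) b)) ` closed_unit_ball Y N"

definition ball_mnc :: "(nat \<Rightarrow> 'a::real_normed_field) set \<Rightarrow> ((nat \<Rightarrow> 'a) \<Rightarrow> real)
   \<Rightarrow> (nat \<Rightarrow> 'a) set \<Rightarrow> ((nat \<Rightarrow> 'a) \<Rightarrow> real) \<Rightarrow> ((nat \<Rightarrow> 'a) \<Rightarrow> (nat \<Rightarrow> 'a)) \<Rightarrow> real" where
  "ball_mnc X NX Y NY T = Inf {r. 0 < r \<and> (\<exists>F. finite F \<and> F \<noteq> {} \<and> F \<subseteq> Y \<and>
       T ` closed_unit_ball X NX \<subseteq> (\<Union>y\<in>F. shifted_ball Y NY y r))}"

definition op_norm :: "(nat \<Rightarrow> 'a::real_normed_field) set \<Rightarrow> ((nat \<Rightarrow> 'a) \<Rightarrow> real)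
   \<Rightarrow> ((nat \<Rightarrow> 'a) \<Rightarrow> real) \<Rightarrow> ((nat \<Rightarrow> 'a) \<Rightarrow> (nat \<Rightarrow> 'a)) \<Rightarrow> real" where
  "op_norm X NX NY T = Sup ((\<lambda>x. NY (T x)) ` closed_unit_ball X NX)"

end

theory Submission
  imports Defs
begin

text \<open>
  The whole unit ball of \<open>\<ell>\<close> lies in the single ball \<open>\<parallel>I\<parallel> B\<^sub>w\<close> around 0, so
  \<open>\<alpha>(I) \<le> \<parallel>I\<parallel> \<le> 1\<close>. Conversely, if finitely many balls \<open>y + r B\<^sub>w\<close> with centres
  \<open>y \<in> c\<^sub>0\<close> covered all unit vectors \<open>e\<^sup>j\<close>, then for \<open>j\<close> so large that every \<open>|y\<^sub>j|\<close> is
  below \<open>1 - r\<close>, writing \<open>e\<^sup>j = y + r b\<close> and reading off the \<open>j\<close>-th coordinate gives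
  \<open>1 \<le> |y\<^sub>j| + r |b\<^sub>j| < 1\<close> as soon as \<open>r < 1\<close>; here \<open>|b\<^sub>j| \<le> \<parallel>b\<parallel>\<^sub>w \<le> 1\<close>.
  Hence every admissible radius is at least \<open>1 \<ge> \<parallel>I\<parallel>\<close>.
\<close>

lemma gen_norm_scale_le:
  assumes "is_gen_norm X N" and "x \<in> X" and "1 \<le> norm c"
  shows "N (seq_scale c x) \<le> norm c * N x"
proof -
  from assms(1) consider "is_seq_norm X N" | "is_seq_quasinorm X N"
    | \<alpha> where "is_seq_alpha_norm \<alpha> X N"
    unfolding is_gen_norm_def by blast
  then show ?thesis
  proof cases
    case 3
    then have "0 < \<alpha>" "\<alpha> \<le> 1" "0 \<le> N x" and scale: "N (seq_scale c x) = norm c powr \<alpha> * N x"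
      using assms(2) unfolding is_seq_alpha_norm_def by auto
    have "norm c powr \<alpha> \<le> norm c powr 1"
      using \<open>\<alpha> \<le> 1\<close> assms(3) by (rule powr_mono)
    then have "norm c powr \<alpha> \<le> norm c"
      using assms(3) by simp
    then show ?thesis
      using scale \<open>0 \<le> N x\<close> by (simp add: mult_right_mono)
  qed (use assms(2) in \<open>auto simp: is_seq_norm_def is_seq_quasinorm_def\<close>)
qed

lemma mem_shifted_ball_zero:
  assumes "lin_subspace X" and "is_gen_norm X N"
    and "0 < t" and "t \<le> 1" and "x \<in> X" and "N x \<le> t"
  shows "x \<in> shifted_ball X N seq_zero t"
proof -
  define b where "b = seq_scale (of_real (1 / t)) x"
  have "b \<in> X"
    using assms(1,5) unfolding lin_subspace_def b_def by blast
  have "norm (of_real (1 / t) :: 'a) = 1 / t"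
    using assms(3) by (simp del: of_real_divide)
  then have "N b \<le> (1 / t) * N x"
    using gen_norm_scale_le[OF assms(2,5), of "of_real (1 / t)"] assms(3,4)
    by (simp add: b_def del: of_real_divide)
  also have "\<dots> \<le> 1"
    using assms(3,6) by (simp add: divide_le_eq)
  finally have "b \<in> closed_unit_ball X N"
    using \<open>b \<in> X\<close> by (simp add: closed_unit_ball_def)
  moreover have "x = seq_add seq_zero (seq_scale (of_real t) b)"
    using assms(3) by (simp add: seq_add_def seq_zero_def seq_scale_def b_def)
  ultimately show ?thesis
    unfolding shifted_ball_def by blast
qed

lemma unit_seq_in_shifted_ball_imp:
  fixes y :: "nat \<Rightarrow> 'a::real_normed_field"
  assumes coord_le: "\<forall>x\<in>Y. \<forall>k. norm (x k) \<le> N x"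
    and "0 \<le> r" and "unit_seq j \<in> shifted_ball Y N y r"
  shows "1 \<le> norm (y j) + r"
proof -
  obtain b where "b \<in> Y" "N b \<le> 1" and e: "unit_seq j = seq_add y (seq_scale (of_real r) b)"
    using assms(3) unfolding shifted_ball_def closed_unit_ball_def by blast
  have "norm (b j) \<le> 1"
    using coord_le \<open>b \<in> Y\<close> \<open>N b \<le> 1\<close> by (meson order_trans)
  have "(1::'a) = y j + of_real r * b j"
    using fun_cong[OF e, of j] by (simp add: unit_seq_def seq_add_def seq_scale_def)
  then have "norm (1::'a) \<le> norm (y j) + norm (of_real r * b j)"
    by (metis norm_triangle_ineq)
  also have "norm (of_real r * b j) = r * norm (b j)"
    using assms(2) by (simp add: norm_mult)
  also have "\<dots> \<le> r"
    using \<open>norm (b j) \<le> 1\<close> assms(2) by (simp add: mult_left_le)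
  finally show ?thesis
    by simp
qed

lemma finite_c0_eventually_small:
  assumes "finite F" and "F \<subseteq> c0" and "0 < \<epsilon>"
  shows "\<exists>j. \<forall>y\<in>F. norm (y j) < \<epsilon>"
proof -
  have "\<forall>y\<in>F. eventually (\<lambda>j. norm (y j) < \<epsilon>) sequentially"
    using assms(2,3) unfolding c0_def by (auto simp: tendsto_iff dist_norm)
  then have "eventually (\<lambda>j. \<forall>y\<in>F. norm (y j) < \<epsilon>) sequentially"
    using assms(1) by (simp add: eventually_ball_finite)
  then show ?thesis
    by (auto simp: eventually_sequentially)
qed

lemma unit_seqs_cover_radius_ge_1:
  assumes "Y \<subseteq> c0" and "\<forall>x\<in>Y. \<forall>k. norm (x k) \<le> N x"
    and "0 \<le> r" and "finite F" and "F \<subseteq> Y"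
    and cover: "\<And>j. unit_seq j \<in> (\<Union>y\<in>F. shifted_ball Y N y r)"
  shows "1 \<le> r"
proof (rule ccontr)
  assume "\<not> 1 \<le> r"
  then obtain j where small: "\<forall>y\<in>F. norm (y j) < 1 - r"
    using finite_c0_eventually_small[of F "1 - r"] assms(1,4,5) by auto
  from cover[of j] obtain y where "y \<in> F" "unit_seq j \<in> shifted_ball Y N y r"
    by blast
  then have "1 \<le> norm (y j) + r"
    using unit_seq_in_shifted_ball_imp assms(2,3) by blast
  with small \<open>y \<in> F\<close> show False
    by fastforce
qed

lemma op_norm_upper:
  assumes "bdd_above ((\<lambda>x. NY (T x)) ` closed_unit_ball X NX)"
    and "x \<in> closed_unit_ball X NX"
  shows "NY (T x) \<le> op_norm X NX NY T"
  unfolding op_norm_def using assms by (intro cSup_upper) auto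

lemma ball_mnc_eqI:
  assumes "0 < r" and "finite F" and "F \<noteq> {}" and "F \<subseteq> Y"
    and "T ` closed_unit_ball X NX \<subseteq> (\<Union>y\<in>F. shifted_ball Y NY y r)"
    and minimal: "\<And>s G. 0 < s \<Longrightarrow> finite G \<Longrightarrow> G \<noteq> {} \<Longrightarrow> G \<subseteq> Y \<Longrightarrow>
      T ` closed_unit_ball X NX \<subseteq> (\<Union>y\<in>G. shifted_ball Y NY y s) \<Longrightarrow> r \<le> s"
  shows "ball_mnc X NX Y NY T = r"
  unfolding ball_mnc_def
proof (rule antisym)
  let ?S = "{s. 0 < s \<and> (\<exists>G. finite G \<and> G \<noteq> {} \<and> G \<subseteq> Y \<and>
    T ` closed_unit_ball X NX \<subseteq> (\<Union>y\<in>G. shifted_ball Y NY y s))}"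
  have "r \<in> ?S"
    using assms(1-5) by blast
  then show "Inf ?S \<le> r"
    by (intro cInf_lower) (auto intro: bdd_belowI[of _ 0])
  show "r \<le> Inf ?S"
  proof (rule cInf_greatest)
    show "?S \<noteq> {}"
      using \<open>r \<in> ?S\<close> by blast
  qed (use minimal in blast)
qed

theorem mainTheorem1:
  fixes l w :: "(nat \<Rightarrow> 'a::real_normed_field) set"
    and Nl Nw :: "(nat \<Rightarrow> 'a) \<Rightarrow> real"
  assumes "lin_subspace l" and "lin_subspace w"
    and "is_gen_norm l Nl" and "is_gen_norm w Nw"
    and "l \<subseteq> c0" and "w \<subseteq> c0"
    and "\<forall>x\<in>w. \<forall>k. norm (x k) \<le> Nw x"
    and "l \<subseteq> w"
    and "bdd_above ((\<lambda>x. Nw (id x)) ` closed_unit_ball l Nl)"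
    and "0 < op_norm l Nl Nw id" and "op_norm l Nl Nw id \<le> 1"
    and "\<forall>j. unit_seq j \<in> closed_unit_ball l Nl"
  shows "ball_mnc l Nl w Nw id = op_norm l Nl Nw id"
proof (rule ball_mnc_eqI)
  let ?N = "op_norm l Nl Nw id"
  show "0 < ?N" "finite {seq_zero}" "{seq_zero} \<noteq> {}"
    using assms(10) by auto
  show "{seq_zero} \<subseteq> w"
    using assms(2) by (simp add: lin_subspace_def)
  show "id ` closed_unit_ball l Nl \<subseteq> (\<Union>y\<in>{seq_zero}. shifted_ball w Nw y ?N)"
  proof clarsimp
    fix x assume x: "x \<in> closed_unit_ball l Nl"
    then have "x \<in> w"
      using assms(8) by (auto simp: closed_unit_ball_def)
    moreover have "Nw x \<le> ?N"
      using op_norm_upper[where T = id, OF assms(9) x] by simp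
    ultimately show "x \<in> shifted_ball w Nw seq_zero ?N"
      using mem_shifted_ball_zero assms(2,4,10,11) by blast
  qed
  fix s G
  assume "0 < s" "finite G" "G \<subseteq> w"
    and cover: "id ` closed_unit_ball l Nl \<subseteq> (\<Union>y\<in>G. shifted_ball w Nw y s)"
  have "unit_seq j \<in> (\<Union>y\<in>G. shifted_ball w Nw y s)" for j
    using cover assms(12) by auto
  then have "1 \<le> s"
    using unit_seqs_cover_radius_ge_1[OF assms(6,7)] \<open>0 < s\<close> \<open>finite G\<close> \<open>G \<subseteq> w\<close>
    by simp
  with assms(11) show "?N \<le> s"
    by linarith
qed

end
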